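(* Let $\odot$ be a pseudo-multiplication on $[0,\infty]$ with left identity $1_{\odot}$, and let $F_{\odot}$ be the set of $\odot$-finite elements. The following conditions are equivalent: (1) $\odot$ is non-degenerate, i.e. $1_{\odot}$ is $\odot$-finite; (2) there exists some $t>0$ that is $\odot$-finite; (3) the monoid $([0,1_{\odot}],\odot)$ is commutative; (4) $F_{\odot}$ is either $[0,\infty]$ or of the form $[0,\phi)$ for some $\phi\in(1_{\odot},\infty]$. Moreover, if $F_{\odot}=[0,\phi)$, then $O(\phi)=\phi$ and $t\odot\phi=\phi\odot t=\phi$ for all $0<t\leqslant\phi$; in particular $\phi\odot\phi=\phi$.
   Context: A pseudo-multiplication is a binary operation $\odot:[0,\infty]\times[0,\infty]\to[0,\infty]$ such that: $\odot$ is associative; $\odot$ is continuous on $(0,\infty)\times[0,\infty]$; for every $t$, the map $s\mapsto s\odot t$ is continuous on $(0,\infty]$; $\odot$ is nondecreasing in each argument; there is a left identity element $1_{\odot}$, i.e. $1_{\odot}\odot t=t$ for all $t$; there are no zero divisors, i.e. $s\odot t=0$ implies $s=0$ or $t=0$; and $0$ is an annihilator, i.e. $0\odot t=t\odot 0=0$ for all $t$. For $t\in[0,\infty]$ put $O(t)=\inf_{s>0} s\odot t$. An element $t$ is called $\odot$-finite if $O(t)=0$, and $\odot$-infinite otherwise. The pseudo-multiplication $\odot$ is called non-degenerate if $O(1_{\odot})=0$. *)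

theory Defs
  imports "HOL-Analysis.Analysis" "HOL-Library.Extended_Nonnegative_Real"
begin

definition pseudo_mult :: "(ennreal \<Rightarrow> ennreal \<Rightarrow> ennreal) \<Rightarrow> ennreal \<Rightarrow> bool" where
  "pseudo_mult m e \<longleftrightarrow>
     (\<forall>a b c. m (m a b) c = m a (m b c)) \<and>
     continuous_on ({0<..<\<infinity>} \<times> UNIV) (\<lambda>(s, t). m s t) \<and>
     (\<forall>t. continuous_on {0<..} (\<lambda>s. m s t)) \<and>
     (\<forall>a b c. a \<le> b \<longrightarrow> m a c \<le> m b c) \<and>
     (\<forall>a b c. a \<le> b \<longrightarrow> m c a \<le> m c b) \<and>
     (\<forall>t. m e t = t) \<and>
     (\<forall>s t. m s t = 0 \<longrightarrow> s = 0 \<or> t = 0) \<and>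
     (\<forall>t. m 0 t = 0 \<and> m t 0 = 0)"

definition pm_O :: "(ennreal \<Rightarrow> ennreal \<Rightarrow> ennreal) \<Rightarrow> ennreal \<Rightarrow> ennreal" where
  "pm_O m t = (INF s\<in>{0<..}. m s t)"

definition pm_finite_set :: "(ennreal \<Rightarrow> ennreal \<Rightarrow> ennreal) \<Rightarrow> ennreal set" where
  "pm_finite_set m = {t. pm_O m t = 0}"

definition pm_nondegenerate :: "(ennreal \<Rightarrow> ennreal \<Rightarrow> ennreal) \<Rightarrow> ennreal \<Rightarrow> bool" where
  "pm_nondegenerate m e \<longleftrightarrow> pm_O m e = 0"

end

theory Submission
  imports Defs
begin

text \<open>
  If \<open>\<O> e > 0\<close>, then \<open>\<O> e \<odot> t = \<O> t\<close> for all \<open>t\<close>: no \<open>t > 0\<close> is finite, and for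
  \<open>0 < a < \<O> e\<close> one gets \<open>\<O> e \<odot> a = \<O> a < \<O> e \<le> a \<odot> \<O> e\<close>.
  If \<open>\<O> e = 0\<close>, a finite left factor does not change \<open>\<O>\<close>; by continuity the finite
  elements then form a down-set without maximum containing \<open>e\<close>, i.e. \<open>[0,\<phi>)\<close> or
  everything, and \<open>\<phi>\<close> absorbs because \<open>\<O> \<phi> = \<phi>\<close> while products of finite elements are
  finite. For commutativity, idempotents \<open>p \<le> e\<close> act as two-sided units on \<open>[0,p]\<close>
  (intermediate value theorem). If no idempotent separates \<open>a \<le> b\<close>, take the least
  idempotent \<open>q > b\<close>: the powers of each \<open>x \<in> (b,q)\<close> decrease to an idempotent below
  \<open>a\<close>, so they bracket \<open>a\<close> and \<open>b\<close>, giving \<open>a \<odot> b \<odot> x \<odot> x \<le> b \<odot> a\<close>; letting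
  \<open>x \<rightarrow> q\<close> removes the two factors \<open>x\<close>.
\<close>

lemma down_closed_without_max_cases:
  fixes S :: "'a::complete_linorder set"
  assumes down: "\<And>s t. t \<in> S \<Longrightarrow> s \<le> t \<Longrightarrow> s \<in> S"
    and no_max: "\<And>t. t \<in> S \<Longrightarrow> t < top \<Longrightarrow> \<exists>t'\<in>S. t < t'"
  shows "S = UNIV \<or> S = {..<Sup S}"
proof (cases "top \<in> S")
  case True
  then show ?thesis using down[OF True] by auto
next
  case False
  have "t < Sup S" if t: "t \<in> S" for t
  proof -
    have "t < top" using False t by (metis top.not_eq_extremum)
    then obtain t' where "t' \<in> S" "t < t'" using no_max t by blast
    then show ?thesis using Sup_upper[of t' S] by simp
  qed
  moreover have "t \<in> S" if "t < Sup S" for t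
    using that down by (auto simp: less_Sup_iff)
  ultimately show ?thesis by auto
qed

lemma ex_bracket_nat:
  fixes f :: "nat \<Rightarrow> 'a::linorder"
  assumes "f n < y" "y \<le> f 0"
  shows "\<exists>i. f (Suc i) < y \<and> y \<le> f i"
  using ex_least_nat_less[of "\<lambda>n. f n < y" n] assms by (auto simp: not_less)

locale pseudo_multiplication =
  fixes m :: "ennreal \<Rightarrow> ennreal \<Rightarrow> ennreal" (infixl "\<odot>" 70) and e :: ennreal
  assumes pseudo_mult: "pseudo_mult m e"
begin

abbreviation \<O> :: "ennreal \<Rightarrow> ennreal" where "\<O> \<equiv> pm_O m"

lemma assoc: "a \<odot> b \<odot> c = a \<odot> (b \<odot> c)"
  and mult_mono_left: "a \<le> b \<Longrightarrow> a \<odot> c \<le> b \<odot> c"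
  and mult_mono_right: "a \<le> b \<Longrightarrow> c \<odot> a \<le> c \<odot> b"
  and unit_mult [simp]: "e \<odot> t = t"
  and mult_eq_zeroD: "s \<odot> t = 0 \<Longrightarrow> s = 0 \<or> t = 0"
  and zero_mult [simp]: "0 \<odot> t = 0"
  and mult_zero [simp]: "t \<odot> 0 = 0"
  using pseudo_mult unfolding pseudo_mult_def by simp_all

lemma mult_mono: "a \<le> b \<Longrightarrow> c \<le> d \<Longrightarrow> a \<odot> c \<le> b \<odot> d"
  using mult_mono_left mult_mono_right order_trans by blast

lemma mult_pos: "0 < s \<Longrightarrow> 0 < t \<Longrightarrow> 0 < s \<odot> t"
  using mult_eq_zeroD[of s t] by (auto simp: zero_less_iff_neq_zero)

lemma unit_pos: "0 < e"
proof (rule ccontr)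
  assume "\<not> 0 < e"
  then have "e \<odot> 1 = 0" by simp
  then show False by simp
qed

lemma isCont_mult_left: "0 < s \<Longrightarrow> isCont (\<lambda>s. s \<odot> t) s"
  using pseudo_mult continuous_on_eq_continuous_at[OF open_greaterThan, of 0 "\<lambda>s. s \<odot> t"]
  unfolding pseudo_mult_def by simp

lemma continuous_on_mult: "continuous_on ({0<..<\<infinity>} \<times> UNIV) (\<lambda>(s, t). s \<odot> t)"
  using pseudo_mult unfolding pseudo_mult_def by blast

lemma isCont_mult_right:
  assumes "0 < s" "s < \<infinity>"
  shows "isCont ((\<odot>) s) t"
proof -
  have "continuous_on UNIV (\<lambda>t. (\<lambda>(s, t). s \<odot> t) (s, t))"
    by (rule continuous_on_compose2[OF continuous_on_mult], intro continuous_intros)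
      (use assms in auto)
  then show ?thesis by (simp add: continuous_on_eq_continuous_at)
qed

lemma isCont_mult_self:
  assumes "0 < s" "s < \<infinity>"
  shows "isCont (\<lambda>s. s \<odot> s) s"
proof -
  have "continuous_on {0<..<\<infinity>} (\<lambda>s. (\<lambda>(s, t). s \<odot> t) (s, s))"
    by (rule continuous_on_compose2[OF continuous_on_mult], intro continuous_intros) auto
  then show ?thesis using assms by (simp add: continuous_on_eq_continuous_at)
qed

lemma Inf_mult:
  assumes "S \<noteq> {}" "0 < Inf S"
  shows "Inf S \<odot> t = (INF s\<in>S. s \<odot> t)"
proof (rule continuous_at_Inf_mono)
  show "mono (\<lambda>s. s \<odot> t)" by (rule monoI) (rule mult_mono_left)
  show "continuous (at_right (Inf S)) (\<lambda>s. s \<odot> t)"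
    using isCont_mult_left[OF assms(2)] by (rule continuous_at_imp_continuous_at_within)
qed (use assms(1) in simp_all)

lemma Sup_mult:
  assumes "S \<noteq> {}" "0 < Sup S"
  shows "Sup S \<odot> t = (SUP s\<in>S. s \<odot> t)"
proof (rule continuous_at_Sup_mono)
  show "mono (\<lambda>s. s \<odot> t)" by (rule monoI) (rule mult_mono_left)
  show "continuous (at_left (Sup S)) (\<lambda>s. s \<odot> t)"
    using isCont_mult_left[OF assms(2)] by (rule continuous_at_imp_continuous_at_within)
qed (use assms(1) in simp_all)

lemma mult_Inf:
  assumes "S \<noteq> {}" "0 < s" "s < \<infinity>"
  shows "s \<odot> Inf S = (INF t\<in>S. s \<odot> t)"
proof (rule continuous_at_Inf_mono)
  show "mono ((\<odot>) s)" by (rule monoI) (rule mult_mono_right)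
  show "continuous (at_right (Inf S)) ((\<odot>) s)"
    using isCont_mult_right[OF assms(2,3)] by (rule continuous_at_imp_continuous_at_within)
qed (use assms(1) in simp_all)

lemma mult_Sup:
  assumes "S \<noteq> {}" "0 < s" "s < \<infinity>"
  shows "s \<odot> Sup S = (SUP t\<in>S. s \<odot> t)"
proof (rule continuous_at_Sup_mono)
  show "mono ((\<odot>) s)" by (rule monoI) (rule mult_mono_right)
  show "continuous (at_left (Sup S)) ((\<odot>) s)"
    using isCont_mult_right[OF assms(2,3)] by (rule continuous_at_imp_continuous_at_within)
qed (use assms(1) in simp_all)

lemma Inf_mult_self:
  assumes "S \<noteq> {}" "0 < Inf S"
  shows "Inf S \<odot> Inf S = (INF s\<in>S. s \<odot> s)"
proof (rule continuous_at_Inf_mono)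
  show "mono (\<lambda>s. s \<odot> s)" by (simp add: monoI mult_mono)
  show "continuous (at_right (Inf S)) (\<lambda>s. s \<odot> s)"
  proof (cases "Inf S = \<infinity>")
    case False
    then have "Inf S < \<infinity>" by (simp add: less_top[symmetric])
    then have "isCont (\<lambda>s. s \<odot> s) (Inf S)" by (rule isCont_mult_self[OF assms(2)])
    then show ?thesis by (rule continuous_at_imp_continuous_at_within)
  next
    case True
    show ?thesis by (simp only: True, simp add: trivial_limit_at_right_top)
  qed
qed (use assms(1) in simp_all)

lemma O_le_mult: "0 < s \<Longrightarrow> \<O> t \<le> s \<odot> t"
  unfolding pm_O_def by (rule INF_lower) simp

lemma O_le: "\<O> t \<le> t"
  using O_le_mult[OF unit_pos] by simp

lemma O_mono: "a \<le> b \<Longrightarrow> \<O> a \<le> \<O> b"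
  unfolding pm_O_def by (rule INF_mono) (auto intro: mult_mono_right)

lemma O_zero [simp]: "\<O> 0 = 0"
  using O_le[of 0] by simp

lemma O_mult_eq_INF: "\<O> (a \<odot> b) = (INF u\<in>(\<lambda>s. s \<odot> a) ` {0<..}. u \<odot> b)"
  unfolding pm_O_def by (simp add: image_image assoc)

lemma INF_mult_eq_O:
  assumes "U \<subseteq> {0<..}" "Inf U = 0"
  shows "(INF u\<in>U. u \<odot> b) = \<O> b"
proof (rule antisym)
  show "\<O> b \<le> (INF u\<in>U. u \<odot> b)"
    using assms(1) by (auto intro!: INF_greatest O_le_mult)
  show "(INF u\<in>U. u \<odot> b) \<le> \<O> b"
    unfolding pm_O_def
  proof (rule INF_greatest)
    fix s :: ennreal
    assume "s \<in> {0<..}"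
    then have "Inf U < s" using assms(2) by simp
    then obtain u where "u \<in> U" "u < s" by (auto simp: Inf_less_iff)
    then have "(INF u\<in>U. u \<odot> b) \<le> u \<odot> b" by (intro INF_lower)
    also have "\<dots> \<le> s \<odot> b" using \<open>u < s\<close> by (intro mult_mono_left) simp
    finally show "(INF u\<in>U. u \<odot> b) \<le> s \<odot> b" .
  qed
qed

lemma O_mult_finite_left:
  assumes "0 < a" "\<O> a = 0"
  shows "\<O> (a \<odot> b) = \<O> b"
  unfolding O_mult_eq_INF
proof (rule INF_mult_eq_O)
  show "(\<lambda>s. s \<odot> a) ` {0<..} \<subseteq> {0<..}" using assms(1) by (auto intro: mult_pos)
  show "Inf ((\<lambda>s. s \<odot> a) ` {0<..}) = 0" using assms(2) by (simp add: pm_O_def)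
qed

lemma O_mult_infinite_left:
  assumes "0 < \<O> a"
  shows "\<O> (a \<odot> b) = \<O> a \<odot> b"
proof -
  have "(1::ennreal) \<in> {0<..}" by simp
  then have "(\<lambda>s. s \<odot> a) ` {0<..} \<noteq> {}" by blast
  then show ?thesis
    using Inf_mult[of "(\<lambda>s. s \<odot> a) ` {0<..}" b] assms
    unfolding O_mult_eq_INF by (simp add: pm_O_def)
qed

lemma O_mult_eq_0: "\<O> a = 0 \<Longrightarrow> \<O> b = 0 \<Longrightarrow> \<O> (a \<odot> b) = 0"
  using O_mult_finite_left[of a b] by (cases "a = 0") (auto simp: zero_less_iff_neq_zero)

lemma degenerate_O_mult:
  assumes "0 < \<O> e"
  shows "\<O> e \<odot> t = \<O> t"
  using O_mult_infinite_left[OF assms, of t] by simp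

lemma degenerate_O_pos: "0 < \<O> e \<Longrightarrow> 0 < t \<Longrightarrow> 0 < \<O> t"
  using degenerate_O_mult mult_pos by metis

lemma degenerate_not_commute:
  assumes degenerate: "0 < \<O> e"
  shows "\<exists>a\<in>{0..e}. \<exists>b\<in>{0..e}. a \<odot> b \<noteq> b \<odot> a"
proof -
  obtain a where a: "0 < a" "a < \<O> e" using dense[OF degenerate] by blast
  have "\<O> e \<odot> a < \<O> e"
    using degenerate_O_mult[OF degenerate, of a] O_le[of a] a(2) by simp
  moreover have "\<O> e \<le> a \<odot> \<O> e"
  proof -
    have "a \<odot> \<O> e = a \<odot> \<O> e \<odot> e"
      using degenerate_O_mult[OF degenerate, of e] by (simp add: assoc)
    also have "\<O> e \<le> \<dots>" by (intro O_le_mult mult_pos a degenerate)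
    finally show ?thesis .
  qed
  ultimately show ?thesis
    using a O_le[of e] by (intro bexI[of _ "\<O> e"] bexI[of _ a]) auto
qed

lemma mult_le_right: "a \<le> e \<Longrightarrow> a \<odot> b \<le> b"
  using mult_mono_left[of a e b] by simp

lemma mult_right_surj:
  assumes "\<O> p = 0" "x \<le> p"
  shows "\<exists>z. z \<odot> p = x"
proof (cases "x = 0")
  case False
  then have "\<O> p < x" using assms(1) by (simp add: zero_less_iff_neq_zero)
  then obtain s where s: "0 < s" "s \<odot> p < x"
    unfolding pm_O_def by (auto simp: INF_less_iff)
  have "s \<le> e"
  proof (rule ccontr)
    assume "\<not> s \<le> e"
    then have "e \<odot> p \<le> s \<odot> p" by (intro mult_mono_left) simp
    then show False using s(2) assms(2) by simp
  qed
  moreover have "continuous_on {s..e} (\<lambda>z. z \<odot> p)"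
    using s(1) by (intro continuous_at_imp_continuous_on ballI isCont_mult_left) auto
  moreover have "s \<odot> p \<le> x" "x \<le> e \<odot> p" using s(2) assms(2) by simp_all
  ultimately show ?thesis using IVT'[of "\<lambda>z. z \<odot> p" s x e] by blast
qed (auto intro: exI[of _ 0])

lemma mult_idempotent_right:
  assumes "\<O> p = 0" "p \<odot> p = p" "x \<le> p"
  shows "x \<odot> p = x"
proof -
  obtain z where "z \<odot> p = x" using mult_right_surj[OF assms(1,3)] by blast
  then show ?thesis using assms(2) by (metis assoc)
qed

lemma mult_left_surj:
  assumes "0 < p" "p < \<infinity>" "x \<le> p \<odot> e"
  shows "\<exists>z. p \<odot> z = x"
proof -
  have "continuous_on {0..e} ((\<odot>) p)"
    using assms(1,2) by (intro continuous_at_imp_continuous_on ballI isCont_mult_right)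
  then show ?thesis using IVT'[of "(\<odot>) p" 0 x e] assms(3) by auto
qed

lemma idempotent_Inf:
  assumes "S \<noteq> {}"
    and "\<And>p. p \<in> S \<Longrightarrow> p \<odot> p \<le> p"
    and "\<And>p. p \<in> S \<Longrightarrow> \<exists>p'\<in>S. p' \<le> p \<odot> p"
  shows "Inf S \<odot> Inf S = Inf S"
proof (rule antisym)
  show "Inf S \<odot> Inf S \<le> Inf S"
  proof (rule Inf_greatest)
    fix p assume "p \<in> S"
    then have "Inf S \<odot> Inf S \<le> p \<odot> p" by (intro mult_mono Inf_lower)
    then show "Inf S \<odot> Inf S \<le> p" using assms(2)[OF \<open>p \<in> S\<close>] by simp
  qed
  show "Inf S \<le> Inf S \<odot> Inf S"
  proof (cases "Inf S = 0")
    case False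
    then have "Inf S \<odot> Inf S = (INF p\<in>S. p \<odot> p)"
      using assms(1) by (intro Inf_mult_self) (simp_all add: zero_less_iff_neq_zero)
    also have "Inf S \<le> \<dots>"
      using assms(3) by (auto intro!: INF_greatest intro: Inf_lower2)
    finally show ?thesis .
  qed simp
qed

lemma least_idempotent_above:
  assumes "b \<le> e"
  obtains q where "q \<odot> q = q" "b \<le> q" "q \<le> e" "\<And>p. p \<odot> p = p \<Longrightarrow> b \<le> p \<Longrightarrow> q \<le> p"
proof
  define Q where "Q = {p. p \<odot> p = p \<and> b \<le> p \<and> p \<le> e}"
  have "e \<in> Q" using assms by (simp add: Q_def)
  show "Inf Q \<odot> Inf Q = Inf Q"
    using \<open>e \<in> Q\<close> by (intro idempotent_Inf) (auto simp: Q_def)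
  show "b \<le> Inf Q" by (auto simp: Q_def intro: Inf_greatest)
  show "Inf Q \<le> e" using \<open>e \<in> Q\<close> by (rule Inf_lower)
  show "Inf Q \<le> p" if "p \<odot> p = p" "b \<le> p" for p
    using that Inf_lower[OF \<open>e \<in> Q\<close>] by (cases "p \<le> e") (auto simp: Q_def intro: Inf_lower)
qed

text \<open>\<open>pow x n\<close> is the \<open>(n+1)\<close>-st power of \<open>x\<close>: there is no right unit to start from.\<close>

primrec pow :: "ennreal \<Rightarrow> nat \<Rightarrow> ennreal" where
  "pow x 0 = x"
| "pow x (Suc n) = pow x n \<odot> x"

lemma pow_add: "pow x i \<odot> pow x j = pow x (Suc (i + j))"
  by (induction j) (simp_all flip: assoc)

lemma pow_sandwich:
  assumes "pow x (Suc i) \<le> a" "a \<le> pow x i" "pow x (Suc j) \<le> b" "b \<le> pow x j"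
  shows "a \<odot> b \<odot> x \<odot> x \<le> b \<odot> a"
proof -
  have "a \<odot> b \<odot> x \<odot> x \<le> pow x i \<odot> pow x j \<odot> x \<odot> x"
    using assms(2,4) by (intro mult_mono order_refl)
  also have "\<dots> = pow x (Suc (Suc j + Suc i))"
    by (simp add: pow_add add.commute)
  also have "\<dots> = pow x (Suc j) \<odot> pow x (Suc i)"
    by (simp only: pow_add)
  also have "\<dots> \<le> b \<odot> a"
    using assms(1,3) by (intro mult_mono)
  finally show ?thesis .
qed

end

locale nondegenerate_pseudo_multiplication = pseudo_multiplication +
  assumes nondegenerate: "pm_nondegenerate m e"
begin

lemma O_unit [simp]: "\<O> e = 0"
  using nondegenerate by (simp add: pm_nondegenerate_def)

lemma O_eq_0_if_le_unit: "t \<le> e \<Longrightarrow> \<O> t = 0"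
  using O_mono[of t e] by simp

lemma ex_greater_O_eq_0:
  assumes "\<O> t = 0" "t < \<infinity>"
  shows "\<exists>t'>t. \<O> t' = 0"
proof (cases "t < e")
  case False
  have "\<O> t < e" using assms(1) unit_pos by simp
  then obtain s where s: "0 < s" "s \<odot> t < e"
    unfolding pm_O_def by (auto simp: INF_less_iff)
  have "s < e"
  proof (rule ccontr)
    assume "\<not> s < e"
    then have "e \<odot> t \<le> s \<odot> t" by (intro mult_mono_left) simp
    then show False using s(2) False by simp
  qed
  then have "s \<odot> Inf {t<..} = (INF u\<in>{t<..}. s \<odot> u)"
    using s(1) less_le_trans[OF \<open>s < e\<close> top_greatest] assms(2) by (intro mult_Inf) auto
  then obtain u where u: "t < u" "s \<odot> u < e"
    using s(2) by (auto simp: INF_less_iff)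
  have "\<O> u = \<O> (s \<odot> u)"
    using s(1) \<open>s < e\<close> by (simp add: O_mult_finite_left O_eq_0_if_le_unit)
  also have "\<dots> = 0"
    using u(2) by (simp add: O_eq_0_if_le_unit)
  finally show ?thesis using u(1) by blast
qed (use O_unit in blast)

lemma finite_set_cases: "pm_finite_set m = UNIV \<or> (\<exists>\<phi>>e. pm_finite_set m = {0..<\<phi>})"
  (is "?F = UNIV \<or> _")
proof -
  have "?F = UNIV \<or> ?F = {..<Sup ?F}"
  proof (rule down_closed_without_max_cases)
    show "s \<in> pm_finite_set m" if "t \<in> pm_finite_set m" "s \<le> t" for s t
      using that O_mono[of s t] by (simp add: pm_finite_set_def)
    show "\<exists>t'\<in>pm_finite_set m. t < t'" if "t \<in> pm_finite_set m" "t < top" for t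
      using that ex_greater_O_eq_0[of t] by (auto simp: pm_finite_set_def)
  qed
  then show ?thesis
  proof
    define \<phi> where "\<phi> = Sup ?F"
    assume "?F = {..<Sup ?F}"
    then have F: "?F = {..<\<phi>}" unfolding \<phi>_def .
    have "e \<in> ?F" by (simp add: pm_finite_set_def)
    then have "e < \<phi>" using F by blast
    moreover have "?F = {0..<\<phi>}" unfolding F by auto
    ultimately show ?thesis by blast
  qed simp
qed

lemma mult_unit_right: "x \<le> e \<Longrightarrow> x \<odot> e = x"
  by (rule mult_idempotent_right) simp_all

lemma mult_le_left: "a \<le> e \<Longrightarrow> b \<le> e \<Longrightarrow> a \<odot> b \<le> a"
  using mult_mono_right[of b e a] mult_unit_right by simp

lemma mult_idempotent_left:
  assumes "p \<odot> p = p" "p \<le> e" "x \<le> p"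
  shows "p \<odot> x = x"
proof (cases "p = 0 \<or> p = e")
  case False
  then have "0 < p" "p < \<infinity>"
    using assms(2) less_le_trans[OF _ top_greatest, of p e] by (auto simp: zero_less_iff_neq_zero)
  moreover have "x \<le> p \<odot> e" using assms(2,3) by (simp add: mult_unit_right)
  ultimately obtain z where "p \<odot> z = x" using mult_left_surj by blast
  then show ?thesis using assms(1) by (metis assoc)
qed (use assms in auto)

lemma pow_decseq:
  assumes "x \<le> e"
  shows "decseq (pow x)"
proof -
  have "pow x n \<le> x" for n
  proof (induction n)
    case (Suc n)
    then have "pow x n \<odot> x \<le> pow x n" using assms by (intro mult_le_left) simp_all
    then show ?case using Suc by simp
  qed simp
  then show ?thesis
    using assms by (intro decseq_SucI) (auto intro: mult_le_left order_trans)
qed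

lemma pow_bracket:
  assumes "x \<le> e" "\<And>p. p \<odot> p = p \<Longrightarrow> p \<le> x \<Longrightarrow> p < a" "a \<le> y" "y \<le> x"
  shows "\<exists>i. pow x (Suc i) \<le> y \<and> y \<le> pow x i"
proof -
  define l where "l = Inf (range (pow x))"
  have "l \<odot> l = l"
    unfolding l_def
  proof (rule idempotent_Inf)
    fix p assume "p \<in> range (pow x)"
    then obtain n where "p = pow x n" by blast
    then have sq: "p \<odot> p = pow x (Suc (n + n))" by (simp only: pow_add)
    then show "\<exists>p'\<in>range (pow x). p' \<le> p \<odot> p" by (metis rangeI order_refl)
    show "p \<odot> p \<le> p"
      using decseqD[OF pow_decseq[OF assms(1)], of n "Suc (n + n)"] sq \<open>p = pow x n\<close> by simp
  qed simp
  moreover have "l \<le> x" unfolding l_def by (metis INF_lower UNIV_I pow.simps(1))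
  ultimately have "l < a" by (rule assms(2))
  then obtain n where "pow x n < a" by (auto simp: l_def INF_less_iff)
  then have "pow x n < y" using assms(3) by simp
  moreover have "y \<le> pow x 0" using assms(4) by simp
  ultimately obtain i where "pow x (Suc i) < y" "y \<le> pow x i" using ex_bracket_nat by blast
  then show ?thesis using less_imp_le by blast
qed

lemma commute_if_idempotent_between:
  assumes "p \<odot> p = p" "a \<le> p" "p \<le> b" "b \<le> e"
  shows "a \<odot> b = b \<odot> a"
proof -
  have "a \<odot> b = a"
  proof (rule antisym)
    show "a \<odot> b \<le> a" using assms by (intro mult_le_left) simp_all
    have "a = a \<odot> p" using assms by (simp add: mult_idempotent_right O_eq_0_if_le_unit)
    also have "\<dots> \<le> a \<odot> b" using assms(3) by (rule mult_mono_right)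
    finally show "a \<le> a \<odot> b" .
  qed
  moreover have "b \<odot> a = a"
  proof (rule antisym)
    show "b \<odot> a \<le> a" using assms(4) by (rule mult_le_right)
    have "a = p \<odot> a" using assms by (simp add: mult_idempotent_left)
    also have "\<dots> \<le> b \<odot> a" using assms(3) by (rule mult_mono_left)
    finally show "a \<le> b \<odot> a" .
  qed
  ultimately show ?thesis by simp
qed

lemma le_if_mult_mult_le:
  assumes "q \<odot> q = q" "q \<le> e" "b < q" "0 < c" "c < q"
    and le: "\<And>x. b < x \<Longrightarrow> x < q \<Longrightarrow> c \<odot> x \<odot> x \<le> d"
  shows "c \<le> d"
proof -
  let ?X = "{b<..<q}"
  have X: "?X \<noteq> {}" "Sup ?X = q" using assms(3) by (simp_all add: dense)
  have c_fin: "c < \<infinity>" using assms(5) by (simp add: less_le_trans[OF _ top_greatest])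
  have "c = c \<odot> q"
    using assms by (simp add: mult_idempotent_right O_eq_0_if_le_unit)
  also have "\<dots> = (SUP x\<in>?X. c \<odot> x)"
    using mult_Sup[OF X(1) assms(4) c_fin] X(2) by simp
  finally have c_Sup: "c = (SUP x\<in>?X. c \<odot> x)" .
  have "c \<odot> y \<le> d" if y: "y \<in> ?X" for y
  proof -
    have "c \<odot> y = (SUP x\<in>?X. c \<odot> x \<odot> y)"
      using Sup_mult[of "(\<odot>) c ` ?X" y] X(1) c_Sup assms(4) by (simp add: image_image)
    also have "\<dots> \<le> d"
    proof (rule SUP_least)
      fix x assume "x \<in> ?X"
      then have "c \<odot> x \<odot> y \<le> c \<odot> max x y \<odot> max x y" by (intro mult_mono) simp_all
      also have "\<dots> \<le> d" using \<open>x \<in> ?X\<close> y by (intro le) (auto simp: max_def)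
      finally show "c \<odot> x \<odot> y \<le> d" .
    qed
    finally show ?thesis .
  qed
  then show ?thesis by (subst c_Sup) (rule SUP_least)
qed

lemma mult_mult_le_swap:
  assumes "a \<le> b" "b < x" "x \<le> e" and below: "\<And>p. p \<odot> p = p \<Longrightarrow> p \<le> x \<Longrightarrow> p < a"
  shows "a \<odot> b \<odot> x \<odot> x \<le> b \<odot> a \<and> b \<odot> a \<odot> x \<odot> x \<le> a \<odot> b"
proof -
  obtain i where "pow x (Suc i) \<le> a" "a \<le> pow x i"
    using pow_bracket[OF assms(3) below order_refl] assms(1,2) by (meson le_less_trans less_imp_le)
  moreover obtain j where "pow x (Suc j) \<le> b" "b \<le> pow x j"
    using pow_bracket[OF assms(3) below assms(1)] assms(2) by (meson less_imp_le)
  ultimately show ?thesis using pow_sandwich by blast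
qed

lemma commute_if_le:
  assumes ab: "a \<le> b" and be: "b \<le> e"
  shows "a \<odot> b = b \<odot> a"
proof (cases "a = 0 \<or> (\<exists>p. p \<odot> p = p \<and> a \<le> p \<and> p \<le> b)")
  case True
  then show ?thesis using commute_if_idempotent_between be by auto
next
  case False
  then have a_pos: "0 < a" and no_idem: "\<And>p. p \<odot> p = p \<Longrightarrow> a \<le> p \<Longrightarrow> p \<le> b \<Longrightarrow> False"
    by (auto simp: zero_less_iff_neq_zero)
  obtain q where q: "q \<odot> q = q" "b \<le> q" "q \<le> e" and q_least: "\<And>p. p \<odot> p = p \<Longrightarrow> b \<le> p \<Longrightarrow> q \<le> p"
    using least_idempotent_above[OF be] by blast
  have "b < q" using no_idem[OF q(1)] ab q(2) by (auto simp: order_le_less)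
  have sandwich: "a \<odot> b \<odot> x \<odot> x \<le> b \<odot> a \<and> b \<odot> a \<odot> x \<odot> x \<le> a \<odot> b" if x: "b < x" "x < q" for x
  proof (rule mult_mult_le_swap[OF ab x(1)])
    show "x \<le> e" using x q(3) by simp
    show "p < a" if p: "p \<odot> p = p" "p \<le> x" for p
    proof (rule ccontr)
      assume "\<not> p < a"
      have "\<not> b \<le> p" using q_least[OF p(1)] p(2) x(2) by auto
      then show False using no_idem[OF p(1)] \<open>\<not> p < a\<close> by (meson less_imp_le not_le not_less)
    qed
  qed
  have "b \<odot> a \<le> a" "a \<odot> b \<le> a"
    using ab be by (simp_all add: mult_le_right mult_le_left)
  then have bounds: "0 < a \<odot> b" "a \<odot> b < q" "0 < b \<odot> a" "b \<odot> a < q"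
    using a_pos ab \<open>b < q\<close> by (simp_all add: mult_pos)
  have "a \<odot> b \<le> b \<odot> a"
    by (rule le_if_mult_mult_le[OF q(1,3) \<open>b < q\<close> bounds(1,2)]) (use sandwich in blast)
  moreover have "b \<odot> a \<le> a \<odot> b"
    by (rule le_if_mult_mult_le[OF q(1,3) \<open>b < q\<close> bounds(3,4)]) (use sandwich in blast)
  ultimately show ?thesis by (rule antisym)
qed

lemma commute_le_unit: "a \<le> e \<Longrightarrow> b \<le> e \<Longrightarrow> a \<odot> b = b \<odot> a"
  using commute_if_le[of a b] commute_if_le[of b a] by (cases "a \<le> b") auto

context
  fixes \<phi> :: ennreal
  assumes finite_set_eq: "pm_finite_set m = {0..<\<phi>}"
begin

lemma O_eq_0_iff_less_bound: "\<O> t = 0 \<longleftrightarrow> t < \<phi>"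
  using finite_set_eq by (auto simp: pm_finite_set_def set_eq_iff)

lemma bound_pos: "0 < \<phi>"
  using O_eq_0_iff_less_bound[of 0] by simp

lemma O_bound: "\<O> \<phi> = \<phi>"
proof (rule antisym)
  show "\<phi> \<le> \<O> \<phi>"
  proof (rule ccontr)
    assume "\<not> \<phi> \<le> \<O> \<phi>"
    then obtain s where s: "0 < s" "s \<odot> \<phi> < \<phi>"
      unfolding pm_O_def by (auto simp: not_le INF_less_iff)
    have "s < e"
    proof (rule ccontr)
      assume "\<not> s < e"
      then have "e \<odot> \<phi> \<le> s \<odot> \<phi>" by (intro mult_mono_left) simp
      then show False using s(2) by simp
    qed
    then have "\<O> \<phi> = \<O> (s \<odot> \<phi>)"
      using s(1) by (simp add: O_mult_finite_left O_eq_0_if_le_unit)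
    also have "\<dots> = 0" using s(2) O_eq_0_iff_less_bound by blast
    finally show False using O_eq_0_iff_less_bound by simp
  qed
qed (rule O_le)

lemma mult_bound_of_less:
  assumes "0 < t" "t < \<phi>"
  shows "t \<odot> \<phi> = \<phi>"
proof (rule antisym)
  have "t \<odot> \<phi> = (SUP u\<in>{..<\<phi>}. t \<odot> u)"
    using mult_Sup[of "{..<\<phi>}" t] bound_pos assms less_le_trans[OF assms(2) top_greatest]
    by (auto simp: lessThan_empty_iff)
  also have "\<dots> \<le> \<phi>"
  proof (rule SUP_least)
    fix u assume "u \<in> {..<\<phi>}"
    then have "\<O> (t \<odot> u) = 0"
      using assms(2) O_mult_eq_0 O_eq_0_iff_less_bound by simp
    then show "t \<odot> u \<le> \<phi>" using O_eq_0_iff_less_bound by (simp add: less_imp_le)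
  qed
  finally show "t \<odot> \<phi> \<le> \<phi>" .
  show "\<phi> \<le> t \<odot> \<phi>" using O_le_mult[OF assms(1), of \<phi>] O_bound by simp
qed

lemma bound_mult_bound: "\<phi> \<odot> \<phi> = \<phi>"
proof (rule antisym)
  have "\<phi> \<odot> \<phi> = (SUP u\<in>{0<..<\<phi>}. u \<odot> \<phi>)"
    using Sup_mult[of "{0<..<\<phi>}" \<phi>] bound_pos by (simp add: dense)
  also have "\<dots> = \<phi>"
    using bound_pos by (simp add: mult_bound_of_less dense)
  finally show "\<phi> \<odot> \<phi> \<le> \<phi>" by simp
  show "\<phi> \<le> \<phi> \<odot> \<phi>" using O_le_mult[OF bound_pos, of \<phi>] O_bound by simp
qed

lemma mult_bound: "0 < t \<Longrightarrow> t \<le> \<phi> \<Longrightarrow> t \<odot> \<phi> = \<phi>"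
  using mult_bound_of_less bound_mult_bound by (cases "t = \<phi>") auto

lemma bound_mult:
  assumes "0 < t" "t \<le> \<phi>"
  shows "\<phi> \<odot> t = \<phi>"
proof (rule antisym)
  show "\<phi> \<odot> t \<le> \<phi>" using mult_mono_right[OF assms(2), of \<phi>] bound_mult_bound by simp
  have "\<O> (\<phi> \<odot> t) = \<phi> \<odot> t"
    using O_mult_infinite_left[of \<phi> t] O_bound bound_pos by simp
  moreover have "0 < \<phi> \<odot> t" using bound_pos assms(1) by (rule mult_pos)
  ultimately show "\<phi> \<le> \<phi> \<odot> t" using O_eq_0_iff_less_bound[of "\<phi> \<odot> t"] by (metis not_le less_irrefl)
qed

end

end

context pseudo_multiplication
begin

lemma nondegenerate_iff_ex_pos_finite: "pm_nondegenerate m e \<longleftrightarrow> (\<exists>t>0. t \<in> pm_finite_set m)"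
  using unit_pos degenerate_O_pos
  by (auto simp: pm_nondegenerate_def pm_finite_set_def zero_less_iff_neq_zero)

lemma nondegenerate_iff_commute:
  "pm_nondegenerate m e \<longleftrightarrow> (\<forall>a\<in>{0..e}. \<forall>b\<in>{0..e}. a \<odot> b = b \<odot> a)"
proof
  assume "pm_nondegenerate m e"
  then interpret nondegenerate_pseudo_multiplication m e by unfold_locales
  show "\<forall>a\<in>{0..e}. \<forall>b\<in>{0..e}. a \<odot> b = b \<odot> a" using commute_le_unit by simp
qed (use degenerate_not_commute in \<open>auto simp: pm_nondegenerate_def zero_less_iff_neq_zero\<close>)

lemma nondegenerate_iff_finite_set_cases:
  "pm_nondegenerate m e \<longleftrightarrow> pm_finite_set m = UNIV \<or> (\<exists>\<phi>>e. pm_finite_set m = {0..<\<phi>})"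
proof
  assume "pm_nondegenerate m e"
  then interpret nondegenerate_pseudo_multiplication m e by unfold_locales
  show "pm_finite_set m = UNIV \<or> (\<exists>\<phi>>e. pm_finite_set m = {0..<\<phi>})" by (rule finite_set_cases)
qed (auto simp: pm_nondegenerate_def pm_finite_set_def set_eq_iff)

lemma finite_bound_absorbing:
  assumes "pm_finite_set m = {0..<\<phi>}"
  shows "\<O> \<phi> = \<phi> \<and> (\<forall>t. 0 < t \<and> t \<le> \<phi> \<longrightarrow> t \<odot> \<phi> = \<phi> \<and> \<phi> \<odot> t = \<phi>) \<and> \<phi> \<odot> \<phi> = \<phi>"
proof -
  have "0 \<in> pm_finite_set m" by (simp add: pm_finite_set_def)
  then have "0 < \<phi>" using assms by simp
  then obtain t where "0 < t" "t < \<phi>" using dense by blast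
  then have "pm_nondegenerate m e" using assms by (auto simp: nondegenerate_iff_ex_pos_finite)
  then interpret nondegenerate_pseudo_multiplication m e by unfold_locales
  show ?thesis using O_bound mult_bound bound_mult bound_mult_bound assms by blast
qed

end

theorem theorem2p8:
  fixes m :: "ennreal \<Rightarrow> ennreal \<Rightarrow> ennreal" and e :: ennreal
  assumes pm: "pseudo_mult m e"
  shows "(pm_nondegenerate m e \<longleftrightarrow> (\<exists>t>0. t \<in> pm_finite_set m))
       \<and> (pm_nondegenerate m e \<longleftrightarrow> (\<forall>a\<in>{0..e}. \<forall>b\<in>{0..e}. m a b = m b a))
       \<and> (pm_nondegenerate m e \<longleftrightarrow>
            (pm_finite_set m = UNIV \<or> (\<exists>\<phi>. e < \<phi> \<and> pm_finite_set m = {0..<\<phi>})))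
       \<and> (\<forall>\<phi>. pm_finite_set m = {0..<\<phi>} \<longrightarrow>
            pm_O m \<phi> = \<phi> \<and> (\<forall>t. 0 < t \<and> t \<le> \<phi> \<longrightarrow> m t \<phi> = \<phi> \<and> m \<phi> t = \<phi>) \<and> m \<phi> \<phi> = \<phi>)"
proof -
  interpret pseudo_multiplication m e by (rule pseudo_multiplication.intro) (fact pm)
  show ?thesis
    using nondegenerate_iff_ex_pos_finite nondegenerate_iff_commute
      nondegenerate_iff_finite_set_cases finite_bound_absorbing
    by blast
qed

end
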